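(* Consider two simple totally unimodular matrices $$A_1=\begin{pmatrix}B&0\\ b^t&1\end{pmatrix},\qquad A_2=\begin{pmatrix}c^t&1\\ C&0\end{pmatrix},$$ where $B\in M_{g_1,n_1}(\mathbb{Z})$, $C\in M_{g_2,n_2}(\mathbb{Z})$ and $b,c$ are integer vectors, and assume that $\overline{Q_i}$ is well-suited for $A_i$ for $i=1,2$. Then one can write $$\overline{Q_1}=\begin{pmatrix}Q_1&r_1\\ r_1^t&1\end{pmatrix},\qquad \overline{Q_2}=\begin{pmatrix}1&r_2^t\\ r_2&Q_2\end{pmatrix}$$ with $Q_i\in M_{g_i,g_i}(\mathbb{R})$ and $r_i\in\mathbb{R}^{g_i}$, and $$\overline{Q}:=\begin{pmatrix}Q_1&r_1&r_1r_2^t\\ r_1^t&1&r_2^t\\ r_2r_1^t&r_2&Q_2\end{pmatrix}\ \text{ is well-suited for }\ A=\begin{pmatrix}B&0&0\\ b^t&c^t&1\\ 0&C&0\end{pmatrix}.$$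
   Context: A real matrix is totally unimodular if every square submatrix has determinant $-1,0$ or $1$; it is simple if it has no zero column and no two proportional columns. For a simple totally unimodular $A\in M_{g,n}(\mathbb{Z})$, a symmetric matrix $Q\in M_{g,g}(\mathbb{R})$ is well-suited for $A$ if $Q$ is positive definite and for every $\xi\in\mathbb{Z}^g\setminus\{0\}$ one has $\xi^tQ\xi\ge1$, with equality if and only if $\xi$ or $-\xi$ is a column vector of $A$. *)

theory Defs
  imports "Jordan_Normal_Form.Determinant" "Jordan_Normal_Form.DL_Submatrix"
begin

definition totally_unimodular :: "int mat \<Rightarrow> bool" where
  "totally_unimodular A \<longleftrightarrow>
     (\<forall>I J. I \<subseteq> {..<dim_row A} \<longrightarrow> J \<subseteq> {..<dim_col A} \<longrightarrow> card I = card J \<longrightarrow>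
        det (submatrix A I J) \<in> {-1, 0, 1})"

definition simple_mat :: "int mat \<Rightarrow> bool" where
  "simple_mat A \<longleftrightarrow>
     (\<forall>j < dim_col A. col A j \<noteq> 0\<^sub>v (dim_row A)) \<and>
     (\<forall>i < dim_col A. \<forall>j < dim_col A. i \<noteq> j \<longrightarrow>
        \<not> (\<exists>t::real. map_vec real_of_int (col A i) = t \<cdot>\<^sub>v map_vec real_of_int (col A j)))"

definition symmetric_real_mat :: "real mat \<Rightarrow> bool" where
  "symmetric_real_mat Q \<longleftrightarrow> transpose_mat Q = Q"

definition pos_def_mat :: "real mat \<Rightarrow> nat \<Rightarrow> bool" where
  "pos_def_mat Q g \<longleftrightarrow>
     (\<forall>x \<in> carrier_vec g. x \<noteq> 0\<^sub>v g \<longrightarrow> x \<bullet> (Q *\<^sub>v x) > 0)"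

(* Q is well-suited for the g x n matrix A (A is assumed simple totally unimodular
   where the notion is used). *)
definition well_suited :: "real mat \<Rightarrow> int mat \<Rightarrow> bool" where
  "well_suited Q A \<longleftrightarrow>
     (let g = dim_row A in
       Q \<in> carrier_mat g g \<and> symmetric_real_mat Q \<and> pos_def_mat Q g \<and>
       (\<forall>\<xi> \<in> carrier_vec g. \<xi> \<noteq> 0\<^sub>v g \<longrightarrow>
          (let x = map_vec real_of_int \<xi> in
             x \<bullet> (Q *\<^sub>v x) \<ge> 1 \<and>
             (x \<bullet> (Q *\<^sub>v x) = 1 \<longleftrightarrow>
                (\<exists>j < dim_col A. \<xi> = col A j \<or> - \<xi> = col A j)))))"

definition A1_mat :: "int mat \<Rightarrow> int vec \<Rightarrow> int mat" where
  "A1_mat B b = four_block_mat B (0\<^sub>m (dim_row B) 1) (mat_of_rows (dim_col B) [b]) (1\<^sub>m 1)"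

definition A2_mat :: "int mat \<Rightarrow> int vec \<Rightarrow> int mat" where
  "A2_mat C c = four_block_mat (mat_of_rows (dim_col C) [c]) (1\<^sub>m 1) C (0\<^sub>m (dim_row C) 1)"

(* A = [B 0 0; b^t c^t 1; 0 C 0] = [B 0; [b^t;0] A_2] *)
definition A_mat :: "int mat \<Rightarrow> int vec \<Rightarrow> int mat \<Rightarrow> int vec \<Rightarrow> int mat" where
  "A_mat B b C c = four_block_mat B (0\<^sub>m (dim_row B) (dim_col C + 1))
      (mat (dim_row C + 1) (dim_col B) (\<lambda>(i,j). if i = 0 then b $ j else 0))
      (A2_mat C c)"

definition Qbar1_mat :: "real mat \<Rightarrow> real vec \<Rightarrow> real mat" where
  "Qbar1_mat Q1 r1 = four_block_mat Q1 (mat_of_cols (dim_vec r1) [r1])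
      (mat_of_rows (dim_vec r1) [r1]) (1\<^sub>m 1)"

definition Qbar2_mat :: "real vec \<Rightarrow> real mat \<Rightarrow> real mat" where
  "Qbar2_mat r2 Q2 = four_block_mat (1\<^sub>m 1) (mat_of_rows (dim_vec r2) [r2])
      (mat_of_cols (dim_vec r2) [r2]) Q2"

(* [Q1 r1 r1 r2^t; r1^t 1 r2^t; r2 r1^t r2 Q2] = [Q1, r1 w^t; w r1^t, Qbar2] with w = (1; r2) *)
definition Qbar_mat :: "real mat \<Rightarrow> real vec \<Rightarrow> real vec \<Rightarrow> real mat \<Rightarrow> real mat" where
  "Qbar_mat Q1 r1 r2 Q2 =
     (let w = vec_of_list [1] @\<^sub>v r2 in
      four_block_mat Q1
        (mat_of_cols (dim_vec r1) [r1] * mat_of_rows (dim_vec w) [w])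
        (mat_of_cols (dim_vec w) [w] * mat_of_rows (dim_vec r1) [r1])
        (Qbar2_mat r2 Q2))"

end

theory Submission
  imports Defs
begin

text \<open>
  Split an integer vector as \<open>(x\<^sub>1, t, x\<^sub>2)\<close> along the blocks of \<open>A\<close> and complete the square:
  \<open>Q\<^sub>1(x\<^sub>1) - (x\<^sub>1\<cdot>r\<^sub>1)\<^sup>2 + Q\<^sub>2(x\<^sub>2) - (x\<^sub>2\<cdot>r\<^sub>2)\<^sup>2 + (t + x\<^sub>1\<cdot>r\<^sub>1 + x\<^sub>2\<cdot>r\<^sub>2)\<^sup>2\<close> is the value of \<open>Q\<close>,
  while \<open>Q\<^sub>1(x\<^sub>1) - (x\<^sub>1\<cdot>r\<^sub>1)\<^sup>2 + (t + x\<^sub>1\<cdot>r\<^sub>1)\<^sup>2\<close> is that of \<open>Q\<^sub>1\<close> (similarly for \<open>Q\<^sub>2\<close>).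
  The Schur complement forms \<open>Q\<^sub>i(x) - (x\<cdot>r\<^sub>i)\<^sup>2\<close> are positive definite, and at a nonzero
  integer \<open>x\<close> they are at least \<open>3/4\<close>: take \<open>t\<close> the integer nearest to \<open>-x\<cdot>r\<^sub>i\<close>.
  So if \<open>x\<^sub>1, x\<^sub>2 \<noteq> 0\<close> the value is at least \<open>3/2\<close>, and no column of \<open>A\<close> has this shape;
  if \<open>x\<^sub>2 = 0\<close> (resp. \<open>x\<^sub>1 = 0\<close>) the value is that of \<open>Q\<^sub>1\<close> (resp. \<open>Q\<^sub>2\<close>) and the signed
  columns of \<open>A\<close> of this shape are exactly those of \<open>A\<^sub>1\<close> (resp. \<open>A\<^sub>2\<close>).
\<close>

abbreviation qform :: "real mat \<Rightarrow> real vec \<Rightarrow> real" where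
  "qform Q x \<equiv> x \<bullet> (Q *\<^sub>v x)"

abbreviation vec1 :: "'a \<Rightarrow> 'a vec" where
  "vec1 t \<equiv> vec 1 (\<lambda>_. t)"

lemma map_vec_append_vec: "map_vec f (u @\<^sub>v v) = map_vec f u @\<^sub>v map_vec f v"
  by (intro eq_vecI) auto

lemma map_vec_vec1: "map_vec f (vec1 t) = vec1 (f t)"
  by (intro eq_vecI) auto

lemma map_vec_of_int_zero: "map_vec real_of_int (0\<^sub>v n) = 0\<^sub>v n"
  by (intro eq_vecI) auto

lemma uminus_append_vec: "- (u @\<^sub>v v) = - u @\<^sub>v - (v :: 'a::group_add vec)"
  by (intro eq_vecI) auto

lemma append_vec_eq_zero_iff:
  assumes "u \<in> carrier_vec n" "v \<in> carrier_vec m"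
  shows "u @\<^sub>v v = 0\<^sub>v (n + m) \<longleftrightarrow> u = 0\<^sub>v n \<and> v = (0\<^sub>v m :: 'a::zero vec)"
proof -
  have "0\<^sub>v (n + m) = (0\<^sub>v n :: 'a vec) @\<^sub>v 0\<^sub>v m"
    by (intro eq_vecI) auto
  then show ?thesis
    using assms by simp
qed

lemma append_vec_nonzero:
  assumes "u \<in> carrier_vec n" "v \<in> carrier_vec m" "u \<noteq> 0\<^sub>v n \<or> v \<noteq> (0\<^sub>v m :: 'a::zero vec)"
  shows "u @\<^sub>v v \<in> carrier_vec (n + m)" "u @\<^sub>v v \<noteq> 0\<^sub>v (n + m)"
  using assms by (auto simp: append_vec_eq_zero_iff)

lemma append3_vec_eq_zero_iff:
  assumes "x \<in> carrier_vec n" "y \<in> carrier_vec k" "z \<in> carrier_vec m"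
  shows "x @\<^sub>v y @\<^sub>v z = 0\<^sub>v (n + (k + m)) \<longleftrightarrow> x = 0\<^sub>v n \<and> y = 0\<^sub>v k \<and> z = (0\<^sub>v m :: 'a::zero vec)"
  using assms by (simp add: append_vec_eq_zero_iff)

lemma vec1_eq_zero_iff: "vec1 t = 0\<^sub>v 1 \<longleftrightarrow> t = (0 :: 'a::zero)"
  unfolding vec_eq_iff by auto

lemma zero_append_vec1_one: "0\<^sub>v n @\<^sub>v vec1 1 = (unit_vec (n + 1) n :: 'a::zero_neq_one vec)"
  by (intro eq_vecI) (auto simp: unit_vec_def)

lemma vec1_one_append_zero: "vec1 1 @\<^sub>v 0\<^sub>v n = (unit_vec (1 + n) 0 :: 'a::zero_neq_one vec)"
  by (intro eq_vecI) (auto simp: unit_vec_def)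

lemma vec_of_list_singleton: "vec_of_list [a] = vec1 a"
  by (intro eq_vecI) auto

lemma carrier_vec_three_blocks:
  assumes "X \<in> carrier_vec (n + (1 + m))"
  obtains x1 t x2 where "x1 \<in> carrier_vec n" "x2 \<in> carrier_vec m" "X = x1 @\<^sub>v vec1 t @\<^sub>v x2"
proof -
  let ?Y = "vec_last X (1 + m)"
  have "vec_first ?Y 1 = vec1 (?Y $ 0)"
    by (intro eq_vecI) (auto simp: vec_first_def)
  then have "X = vec_first X n @\<^sub>v vec1 (?Y $ 0) @\<^sub>v vec_last ?Y m"
    using vec_first_last_append[OF assms] vec_first_last_append[of ?Y 1 m] by simp
  then show thesis
    using that vec_first_carrier vec_last_carrier by blast
qed

(* Stated with Suc 0: the simplifier rewrites the dimension 1 of vec1 into this form. *)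
lemma scalar_prod_vec1 [simp]: "vec (Suc 0) (\<lambda>_. s) \<bullet> vec (Suc 0) (\<lambda>_. t) = s * t"
  by (simp add: scalar_prod_def)

lemma qform_four_block_mat:
  assumes "A \<in> carrier_mat n1 n1" "B \<in> carrier_mat n1 n2" "C \<in> carrier_mat n2 n1"
    "D \<in> carrier_mat n2 n2" "x \<in> carrier_vec n1" "y \<in> carrier_vec n2"
  shows "qform (four_block_mat A B C D) (x @\<^sub>v y) =
     qform A x + x \<bullet> (B *\<^sub>v y) + y \<bullet> (C *\<^sub>v x) + qform D y"
  using assms by (simp add: four_block_mat_mult_vec scalar_prod_append[of _ n1 _ n2]
      scalar_prod_add_distrib[of _ n1] scalar_prod_add_distrib[of _ n2])

lemma mat_of_cols_mult_vec1:
  fixes u :: "'a::comm_ring_1 vec"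
  shows "u \<in> carrier_vec n \<Longrightarrow> mat_of_cols n [u] *\<^sub>v vec1 t = t \<cdot>\<^sub>v u"
  by (intro eq_vecI) (auto simp: mat_of_cols_def row_def scalar_prod_def)

lemma mat_of_rows_mult_vec:
  fixes w :: "'a::comm_ring_1 vec"
  shows "w \<in> carrier_vec n \<Longrightarrow> y \<in> carrier_vec n \<Longrightarrow> mat_of_rows n [w] *\<^sub>v y = vec1 (w \<bullet> y)"
  by (intro eq_vecI) (auto simp: mat_of_rows_def row_def scalar_prod_def)

lemma outer_product_mult_vec:
  fixes u w y :: "'a::comm_ring_1 vec"
  assumes "u \<in> carrier_vec n" "w \<in> carrier_vec m" "y \<in> carrier_vec m"
  shows "(mat_of_cols n [u] * mat_of_rows m [w]) *\<^sub>v y = (w \<bullet> y) \<cdot>\<^sub>v u"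
proof -
  have "(mat_of_cols n [u] * mat_of_rows m [w]) *\<^sub>v y = mat_of_cols n [u] *\<^sub>v (mat_of_rows m [w] *\<^sub>v y)"
    using assms by (intro assoc_mult_mat_vec[of _ n 1 _ m]) auto
  then show ?thesis
    using assms by (simp only: mat_of_rows_mult_vec mat_of_cols_mult_vec1)
qed

lemma transpose_four_block_mat_upper_left:
  assumes "A \<in> carrier_mat n n" "B \<in> carrier_mat n m" "C \<in> carrier_mat m n" "D \<in> carrier_mat m m"
    and sym: "transpose_mat (four_block_mat A B C D) = four_block_mat A B C D"
  shows "transpose_mat A = A"
proof (rule eq_matI)
  fix i j assume "i < dim_row A" "j < dim_col A"
  then have ij: "i < n" "j < n" using assms(1) by auto
  have "four_block_mat A B C D $$ (j, i) = four_block_mat A B C D $$ (i, j)"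
    using arg_cong[OF sym, of "\<lambda>M. M $$ (i, j)"] ij assms(1-4) by simp
  then show "transpose_mat A $$ (i, j) = A $$ (i, j)"
    using ij assms(1-4) by simp
qed (use assms(1) in auto)

section \<open>The bordered forms\<close>

lemma qform_Qbar1_mat:
  assumes "Q \<in> carrier_mat g g" "r \<in> carrier_vec g" "x \<in> carrier_vec g"
  shows "qform (Qbar1_mat Q r) (x @\<^sub>v vec1 t) = (qform Q x - (x \<bullet> r)\<^sup>2) + (t + x \<bullet> r)\<^sup>2"
proof -
  have "qform (Qbar1_mat Q r) (x @\<^sub>v vec1 t) =
      qform Q x + x \<bullet> (mat_of_cols g [r] *\<^sub>v vec1 t) + vec1 t \<bullet> (mat_of_rows g [r] *\<^sub>v x)
      + vec1 t \<bullet> (1\<^sub>m 1 *\<^sub>v vec1 t)"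
    unfolding Qbar1_mat_def carrier_vecD[OF assms(2)]
    by (rule qform_four_block_mat) (use assms in auto)
  also have "\<dots> = qform Q x + t * (x \<bullet> r) + t * (r \<bullet> x) + t * t"
    using assms by (simp only: mat_of_cols_mult_vec1 mat_of_rows_mult_vec one_mult_mat_vec) simp
  finally show ?thesis
    using comm_scalar_prod[OF assms(2,3)] by (simp add: power2_eq_square algebra_simps)
qed

lemma qform_Qbar2_mat:
  assumes "Q \<in> carrier_mat g g" "r \<in> carrier_vec g" "x \<in> carrier_vec g"
  shows "qform (Qbar2_mat r Q) (vec1 t @\<^sub>v x) = (qform Q x - (x \<bullet> r)\<^sup>2) + (t + x \<bullet> r)\<^sup>2"
proof -
  have "qform (Qbar2_mat r Q) (vec1 t @\<^sub>v x) =
      vec1 t \<bullet> (1\<^sub>m 1 *\<^sub>v vec1 t) + vec1 t \<bullet> (mat_of_rows g [r] *\<^sub>v x)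
      + x \<bullet> (mat_of_cols g [r] *\<^sub>v vec1 t) + qform Q x"
    unfolding Qbar2_mat_def carrier_vecD[OF assms(2)]
    by (rule qform_four_block_mat) (use assms in auto)
  also have "\<dots> = t * t + t * (r \<bullet> x) + t * (x \<bullet> r) + qform Q x"
    using assms by (simp only: mat_of_cols_mult_vec1 mat_of_rows_mult_vec one_mult_mat_vec) simp
  finally show ?thesis
    using comm_scalar_prod[OF assms(2,3)] by (simp add: power2_eq_square algebra_simps)
qed

lemma qform_Qbar_mat:
  assumes Q1: "Q1 \<in> carrier_mat g1 g1" and r1: "r1 \<in> carrier_vec g1"
    and Q2: "Q2 \<in> carrier_mat g2 g2" and r2: "r2 \<in> carrier_vec g2"
    and x1: "x1 \<in> carrier_vec g1" and x2: "x2 \<in> carrier_vec g2"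
  shows "qform (Qbar_mat Q1 r1 r2 Q2) (x1 @\<^sub>v vec1 t @\<^sub>v x2) =
    (qform Q1 x1 - (x1 \<bullet> r1)\<^sup>2) + (qform Q2 x2 - (x2 \<bullet> r2)\<^sup>2) + (t + x1 \<bullet> r1 + x2 \<bullet> r2)\<^sup>2"
proof -
  define w where "w = vec1 1 @\<^sub>v r2"
  define y where "y = vec1 t @\<^sub>v x2"
  have w: "w \<in> carrier_vec (1 + g2)" and y: "y \<in> carrier_vec (1 + g2)"
    unfolding w_def y_def by (intro append_carrier_vec; use r2 x2 in simp)+
  have wy: "w \<bullet> y = t + x2 \<bullet> r2"
    unfolding w_def y_def using r2 x2
    by (simp add: scalar_prod_append[of _ 1 _ g2] comm_scalar_prod[of r2 g2])
  have Qbar2: "Qbar2_mat r2 Q2 \<in> carrier_mat (1 + g2) (1 + g2)"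
    unfolding Qbar2_mat_def using Q2 r2 by auto
  have "qform (Qbar_mat Q1 r1 r2 Q2) (x1 @\<^sub>v y) =
      qform Q1 x1 + x1 \<bullet> ((mat_of_cols g1 [r1] * mat_of_rows (1 + g2) [w]) *\<^sub>v y)
      + y \<bullet> ((mat_of_cols (1 + g2) [w] * mat_of_rows g1 [r1]) *\<^sub>v x1) + qform (Qbar2_mat r2 Q2) y"
    unfolding Qbar_mat_def Let_def vec_of_list_singleton w_def[symmetric]
      carrier_vecD[OF r1] carrier_vecD[OF w]
    by (rule qform_four_block_mat) (use Q1 Qbar2 x1 y in auto)
  also have "\<dots> = qform Q1 x1 + 2 * (x1 \<bullet> r1) * (t + x2 \<bullet> r2)
      + (qform Q2 x2 - (x2 \<bullet> r2)\<^sup>2) + (t + x2 \<bullet> r2)\<^sup>2"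
    using r1 x1 w y qform_Qbar2_mat[OF Q2 r2 x2, of t, folded y_def]
    by (simp add: outer_product_mult_vec comm_scalar_prod[of r1 g1] comm_scalar_prod[of y _ w] wy)
  finally show ?thesis
    unfolding y_def by (simp add: power2_eq_square algebra_simps)
qed

lemma qform_Qbar_mat_zero_right:
  assumes "Q1 \<in> carrier_mat g1 g1" "r1 \<in> carrier_vec g1" "Q2 \<in> carrier_mat g2 g2" "r2 \<in> carrier_vec g2"
    and "x1 \<in> carrier_vec g1"
  shows "qform (Qbar_mat Q1 r1 r2 Q2) (x1 @\<^sub>v vec1 t @\<^sub>v 0\<^sub>v g2) = qform (Qbar1_mat Q1 r1) (x1 @\<^sub>v vec1 t)"
  unfolding qform_Qbar_mat[OF assms zero_carrier_vec] qform_Qbar1_mat[OF assms(1,2,5)]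
  using assms(3,4) by simp

lemma qform_Qbar_mat_zero_left:
  assumes "Q1 \<in> carrier_mat g1 g1" "r1 \<in> carrier_vec g1" "Q2 \<in> carrier_mat g2 g2" "r2 \<in> carrier_vec g2"
    and "x2 \<in> carrier_vec g2"
  shows "qform (Qbar_mat Q1 r1 r2 Q2) (0\<^sub>v g1 @\<^sub>v vec1 t @\<^sub>v x2) = qform (Qbar2_mat r2 Q2) (vec1 t @\<^sub>v x2)"
  unfolding qform_Qbar_mat[OF assms(1-4) zero_carrier_vec assms(5)] qform_Qbar2_mat[OF assms(3-5)]
  using assms(1,2) by simp

lemma qform_Qbar_mat_of_int_zero_right:
  assumes "Q1 \<in> carrier_mat g1 g1" "r1 \<in> carrier_vec g1" "Q2 \<in> carrier_mat g2 g2" "r2 \<in> carrier_vec g2"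
    and "x1 \<in> carrier_vec g1"
  shows "qform (Qbar_mat Q1 r1 r2 Q2) (map_vec real_of_int (x1 @\<^sub>v vec1 a @\<^sub>v 0\<^sub>v g2)) =
    qform (Qbar1_mat Q1 r1) (map_vec real_of_int (x1 @\<^sub>v vec1 a))"
  unfolding map_vec_append_vec map_vec_vec1 map_vec_of_int_zero
  by (rule qform_Qbar_mat_zero_right[OF assms(1-4)]) (use assms(5) in simp)

lemma qform_Qbar_mat_of_int_zero_left:
  assumes "Q1 \<in> carrier_mat g1 g1" "r1 \<in> carrier_vec g1" "Q2 \<in> carrier_mat g2 g2" "r2 \<in> carrier_vec g2"
    and "x2 \<in> carrier_vec g2"
  shows "qform (Qbar_mat Q1 r1 r2 Q2) (map_vec real_of_int (0\<^sub>v g1 @\<^sub>v vec1 a @\<^sub>v x2)) =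
    qform (Qbar2_mat r2 Q2) (map_vec real_of_int (vec1 a @\<^sub>v x2))"
  unfolding map_vec_append_vec map_vec_vec1 map_vec_of_int_zero
  by (rule qform_Qbar_mat_zero_left[OF assms(1-4)]) (use assms(5) in simp)

lemma Qbar1_mat_decomposition:
  assumes Qb: "Qb \<in> carrier_mat (g + 1) (g + 1)" and sym: "transpose_mat Qb = Qb"
    and corner: "Qb $$ (g, g) = 1"
  obtains Q r where "Q \<in> carrier_mat g g" "r \<in> carrier_vec g" "Qb = Qbar1_mat Q r"
proof
  let ?Q = "mat g g (\<lambda>(i, j). Qb $$ (i, j))" and ?r = "vec g (\<lambda>i. Qb $$ (i, g))"
  have Qb_sym: "Qb $$ (j, i) = Qb $$ (i, j)" if "i < g + 1" "j < g + 1" for i j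
    using Qb that by (metis carrier_matD index_transpose_mat(1) sym)
  show "Qb = Qbar1_mat ?Q ?r"
  proof (rule eq_matI)
    fix i j assume "i < dim_row (Qbar1_mat ?Q ?r)" "j < dim_col (Qbar1_mat ?Q ?r)"
    then have "i < g + 1" "j < g + 1" by (auto simp: Qbar1_mat_def)
    then show "Qb $$ (i, j) = Qbar1_mat ?Q ?r $$ (i, j)"
      using Qb_sym[of g j] corner unfolding Qbar1_mat_def
      by (auto simp: mat_of_rows_def mat_of_cols_def less_Suc_eq)
  qed (use Qb in \<open>auto simp: Qbar1_mat_def\<close>)
qed auto

lemma Qbar2_mat_decomposition:
  assumes Qb: "Qb \<in> carrier_mat (1 + g) (1 + g)" and sym: "transpose_mat Qb = Qb"
    and corner: "Qb $$ (0, 0) = 1"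
  obtains Q r where "Q \<in> carrier_mat g g" "r \<in> carrier_vec g" "Qb = Qbar2_mat r Q"
proof
  let ?Q = "mat g g (\<lambda>(i, j). Qb $$ (i + 1, j + 1))" and ?r = "vec g (\<lambda>i. Qb $$ (i + 1, 0))"
  have Qb_sym: "Qb $$ (j, i) = Qb $$ (i, j)" if "i < 1 + g" "j < 1 + g" for i j
    using Qb that by (metis carrier_matD index_transpose_mat(1) sym)
  show "Qb = Qbar2_mat ?r ?Q"
  proof (rule eq_matI)
    fix i j assume "i < dim_row (Qbar2_mat ?r ?Q)" "j < dim_col (Qbar2_mat ?r ?Q)"
    then have "i < 1 + g" "j < 1 + g" by (auto simp: Qbar2_mat_def)
    then show "Qb $$ (i, j) = Qbar2_mat ?r ?Q $$ (i, j)"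
      using Qb_sym[of 0 j] corner unfolding Qbar2_mat_def
      by (cases i; cases j) (auto simp: mat_of_rows_def mat_of_cols_def)
  qed (use Qb in \<open>auto simp: Qbar2_mat_def\<close>)
qed auto

lemma transpose_Qbar_mat:
  assumes Q1: "Q1 \<in> carrier_mat g1 g1" and r1: "r1 \<in> carrier_vec g1"
    and Q2: "Q2 \<in> carrier_mat g2 g2" and r2: "r2 \<in> carrier_vec g2"
    and sym1: "transpose_mat Q1 = Q1" and sym2: "transpose_mat (Qbar2_mat r2 Q2) = Qbar2_mat r2 Q2"
  shows "transpose_mat (Qbar_mat Q1 r1 r2 Q2) = Qbar_mat Q1 r1 r2 Q2"
proof -
  define w where "w = vec_of_list [1::real] @\<^sub>v r2"
  have w: "w \<in> carrier_vec (1 + g2)"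
    unfolding w_def vec_of_list_singleton by (intro append_carrier_vec; use r2 in simp)
  have Qbar2: "Qbar2_mat r2 Q2 \<in> carrier_mat (1 + g2) (1 + g2)"
    unfolding Qbar2_mat_def using Q2 r2 by auto
  have outer: "transpose_mat (mat_of_cols n [u] * mat_of_rows m [v]) = mat_of_cols m [v] * mat_of_rows n [u]"
    for u v :: "real vec" and n m
    by (subst transpose_mult[of _ n 1 _ m]) (auto simp: transpose_mat_of_rows transpose_mat_of_cols)
  show ?thesis
    unfolding Qbar_mat_def Let_def w_def[symmetric] carrier_vecD[OF r1] carrier_vecD[OF w]
    by (subst transpose_four_block_mat[OF Q1 _ _ Qbar2]) (auto simp: outer sym1 sym2)
qed

section \<open>Schur complements\<close>

lemma schur_qform_pos_Qbar1:
  assumes "Q \<in> carrier_mat g g" "r \<in> carrier_vec g" "pos_def_mat (Qbar1_mat Q r) (g + 1)"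
    "x \<in> carrier_vec g" "x \<noteq> 0\<^sub>v g"
  shows "0 < qform Q x - (x \<bullet> r)\<^sup>2"
proof -
  have "x @\<^sub>v vec1 (- (x \<bullet> r)) \<in> carrier_vec (g + 1)"
    "x @\<^sub>v vec1 (- (x \<bullet> r)) \<noteq> 0\<^sub>v (g + 1)"
    using append_vec_nonzero[OF assms(4), of "vec1 (- (x \<bullet> r))" 1] assms(5) by auto
  then show ?thesis
    using assms(3) qform_Qbar1_mat[OF assms(1,2,4)] unfolding pos_def_mat_def by fastforce
qed

lemma schur_qform_pos_Qbar2:
  assumes "Q \<in> carrier_mat g g" "r \<in> carrier_vec g" "pos_def_mat (Qbar2_mat r Q) (1 + g)"
    "x \<in> carrier_vec g" "x \<noteq> 0\<^sub>v g"
  shows "0 < qform Q x - (x \<bullet> r)\<^sup>2"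
proof -
  have "vec1 (- (x \<bullet> r)) @\<^sub>v x \<in> carrier_vec (1 + g)"
    "vec1 (- (x \<bullet> r)) @\<^sub>v x \<noteq> 0\<^sub>v (1 + g)"
    using append_vec_nonzero[OF _ assms(4), of "vec1 (- (x \<bullet> r))" 1] assms(5) by auto
  then show ?thesis
    using assms(3) qform_Qbar2_mat[OF assms(1,2,4)] unfolding pos_def_mat_def by fastforce
qed

lemma three_quarters_le_by_rounding:
  fixes R s :: real
  assumes "\<And>a::int. 1 \<le> R + (of_int a + s)\<^sup>2"
  shows "3/4 \<le> R"
proof -
  define a where "a = - \<lfloor>s + 1/2\<rfloor>"
  have "\<bar>of_int a + s\<bar> \<le> 1/2"
    unfolding a_def by linarith
  then have "(of_int a + s)\<^sup>2 \<le> (1/2)\<^sup>2"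
    by (simp only: power2_le_iff_abs_le)
  with assms[of a] show ?thesis
    by (simp add: power_divide)
qed

lemma schur_qform_ge_Qbar1:
  assumes "Q \<in> carrier_mat g g" "r \<in> carrier_vec g"
    and lattice: "\<forall>\<eta>\<in>carrier_vec (g + 1). \<eta> \<noteq> 0\<^sub>v (g + 1) \<longrightarrow>
      1 \<le> qform (Qbar1_mat Q r) (map_vec real_of_int \<eta>)"
    and "\<xi> \<in> carrier_vec g" "\<xi> \<noteq> 0\<^sub>v g"
  shows "3/4 \<le> qform Q (map_vec real_of_int \<xi>) - (map_vec real_of_int \<xi> \<bullet> r)\<^sup>2"
proof (rule three_quarters_le_by_rounding)
  fix a :: int
  have "\<xi> @\<^sub>v vec1 a \<in> carrier_vec (g + 1)" "\<xi> @\<^sub>v vec1 a \<noteq> 0\<^sub>v (g + 1)"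
    using append_vec_nonzero[OF assms(4), of "vec1 a" 1] assms(5) by auto
  moreover have "map_vec real_of_int (\<xi> @\<^sub>v vec1 a) = map_vec real_of_int \<xi> @\<^sub>v vec1 (of_int a)"
    by (auto simp: map_vec_append_vec)
  ultimately show "1 \<le> qform Q (map_vec real_of_int \<xi>) - (map_vec real_of_int \<xi> \<bullet> r)\<^sup>2
      + (of_int a + map_vec real_of_int \<xi> \<bullet> r)\<^sup>2"
    using lattice qform_Qbar1_mat[OF assms(1,2), of "map_vec real_of_int \<xi>"] assms(4) by force
qed

lemma schur_qform_ge_Qbar2:
  assumes "Q \<in> carrier_mat g g" "r \<in> carrier_vec g"
    and lattice: "\<forall>\<eta>\<in>carrier_vec (1 + g). \<eta> \<noteq> 0\<^sub>v (1 + g) \<longrightarrow>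
      1 \<le> qform (Qbar2_mat r Q) (map_vec real_of_int \<eta>)"
    and "\<xi> \<in> carrier_vec g" "\<xi> \<noteq> 0\<^sub>v g"
  shows "3/4 \<le> qform Q (map_vec real_of_int \<xi>) - (map_vec real_of_int \<xi> \<bullet> r)\<^sup>2"
proof (rule three_quarters_le_by_rounding)
  fix a :: int
  have "vec1 a @\<^sub>v \<xi> \<in> carrier_vec (1 + g)" "vec1 a @\<^sub>v \<xi> \<noteq> 0\<^sub>v (1 + g)"
    using append_vec_nonzero[OF _ assms(4), of "vec1 a" 1] assms(5) by auto
  moreover have "map_vec real_of_int (vec1 a @\<^sub>v \<xi>) = vec1 (of_int a) @\<^sub>v map_vec real_of_int \<xi>"
    by (auto simp: map_vec_append_vec)
  ultimately show "1 \<le> qform Q (map_vec real_of_int \<xi>) - (map_vec real_of_int \<xi> \<bullet> r)\<^sup>2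
      + (of_int a + map_vec real_of_int \<xi> \<bullet> r)\<^sup>2"
    using lattice qform_Qbar2_mat[OF assms(1,2), of "map_vec real_of_int \<xi>"] assms(4) by force
qed

lemma pos_def_Qbar_mat:
  assumes Q1: "Q1 \<in> carrier_mat g1 g1" and r1: "r1 \<in> carrier_vec g1"
    and Q2: "Q2 \<in> carrier_mat g2 g2" and r2: "r2 \<in> carrier_vec g2"
    and pd1: "pos_def_mat (Qbar1_mat Q1 r1) (g1 + 1)" and pd2: "pos_def_mat (Qbar2_mat r2 Q2) (1 + g2)"
  shows "pos_def_mat (Qbar_mat Q1 r1 r2 Q2) (g1 + (1 + g2))"
  unfolding pos_def_mat_def
proof (intro ballI impI)
  fix X :: "real vec" assume X: "X \<in> carrier_vec (g1 + (1 + g2))" and nz: "X \<noteq> 0\<^sub>v (g1 + (1 + g2))"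
  obtain x1 t x2 where x1: "x1 \<in> carrier_vec g1" and x2: "x2 \<in> carrier_vec g2"
    and X_eq: "X = x1 @\<^sub>v vec1 t @\<^sub>v x2"
    using carrier_vec_three_blocks[OF X] .
  define P1 where "P1 = qform Q1 x1 - (x1 \<bullet> r1)\<^sup>2"
  define P2 where "P2 = qform Q2 x2 - (x2 \<bullet> r2)\<^sup>2"
  have P1: "x1 = 0\<^sub>v g1 \<Longrightarrow> P1 = 0" "x1 \<noteq> 0\<^sub>v g1 \<Longrightarrow> 0 < P1"
    unfolding P1_def using schur_qform_pos_Qbar1[OF Q1 r1 pd1 x1] Q1 r1 by auto
  have P2: "x2 = 0\<^sub>v g2 \<Longrightarrow> P2 = 0" "x2 \<noteq> 0\<^sub>v g2 \<Longrightarrow> 0 < P2"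
    unfolding P2_def using schur_qform_pos_Qbar2[OF Q2 r2 pd2 x2] Q2 r2 by auto
  have "x1 = 0\<^sub>v g1 \<Longrightarrow> x2 = 0\<^sub>v g2 \<Longrightarrow> t \<noteq> 0"
    using nz x1 x2 unfolding X_eq by (auto simp: append3_vec_eq_zero_iff vec1_eq_zero_iff)
  then have "0 < P1 + P2 + (t + x1 \<bullet> r1 + x2 \<bullet> r2)\<^sup>2"
    using P1 P2 r1 r2 by (cases "x1 = 0\<^sub>v g1"; cases "x2 = 0\<^sub>v g2") (auto intro: add_pos_nonneg add_nonneg_pos)
  then show "0 < qform (Qbar_mat Q1 r1 r2 Q2) X"
    unfolding X_eq qform_Qbar_mat[OF Q1 r1 Q2 r2 x1 x2] P1_def P2_def .
qed

section \<open>Signed columns\<close>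

lemma ex_less_add_iff: "(\<exists>j < m + (n::nat). P j) \<longleftrightarrow> (\<exists>j < m. P j) \<or> (\<exists>k < n. P (m + k))"
proof
  assume "\<exists>j < m + n. P j"
  then obtain j where j: "j < m + n" "P j" by blast
  show "(\<exists>j < m. P j) \<or> (\<exists>k < n. P (m + k))"
  proof (cases "j < m")
    case False
    then have "j - m < n" "P (m + (j - m))" using j by auto
    then show ?thesis by blast
  qed (use j in blast)
next
  assume "(\<exists>j < m. P j) \<or> (\<exists>k < n. P (m + k))"
  then show "\<exists>j < m + n. P j"
    by (meson add_less_cancel_left trans_less_add1)
qed

definition eq_up_to_sign :: "'a::group_add vec \<Rightarrow> 'a vec \<Rightarrow> bool" where
  "eq_up_to_sign u v \<longleftrightarrow> u = v \<or> - u = v"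

definition is_signed_column :: "'a::group_add mat \<Rightarrow> 'a vec \<Rightarrow> bool" where
  "is_signed_column A \<xi> \<longleftrightarrow> (\<exists>j < dim_col A. eq_up_to_sign \<xi> (col A j))"

lemma eq_up_to_sign_zero_append:
  assumes "u \<in> carrier_vec n"
  shows "eq_up_to_sign (u @\<^sub>v v) (0\<^sub>v n @\<^sub>v v') \<longleftrightarrow> u = 0\<^sub>v n \<and> eq_up_to_sign v v'"
proof -
  have "u @\<^sub>v v = 0\<^sub>v n @\<^sub>v v' \<longleftrightarrow> u = 0\<^sub>v n \<and> v = v'"
    "- u @\<^sub>v - v = 0\<^sub>v n @\<^sub>v v' \<longleftrightarrow> - u = 0\<^sub>v n \<and> - v = v'"
    using assms by (simp_all add: append_vec_eq[of _ n])
  then show ?thesis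
    unfolding eq_up_to_sign_def uminus_append_vec uminus_zero_vec_eq[OF assms] by blast
qed

lemma eq_up_to_sign_append_zero_right:
  assumes "u \<in> carrier_vec n1" "u' \<in> carrier_vec n1" "v \<in> carrier_vec n2" "v' \<in> carrier_vec n2"
    "w \<in> carrier_vec m"
  shows "eq_up_to_sign (u @\<^sub>v v @\<^sub>v w) (u' @\<^sub>v v' @\<^sub>v 0\<^sub>v m) \<longleftrightarrow>
    w = 0\<^sub>v m \<and> eq_up_to_sign (u @\<^sub>v v) (u' @\<^sub>v v')"
proof -
  have "u @\<^sub>v v @\<^sub>v w = u' @\<^sub>v v' @\<^sub>v 0\<^sub>v m \<longleftrightarrow> u = u' \<and> v = v' \<and> w = 0\<^sub>v m"
    "- u @\<^sub>v - v @\<^sub>v - w = u' @\<^sub>v v' @\<^sub>v 0\<^sub>v m \<longleftrightarrow> - u = u' \<and> - v = v' \<and> - w = 0\<^sub>v m"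
    "u @\<^sub>v v = u' @\<^sub>v v' \<longleftrightarrow> u = u' \<and> v = v'"
    "- u @\<^sub>v - v = u' @\<^sub>v v' \<longleftrightarrow> - u = u' \<and> - v = v'"
    using assms by (simp_all add: append_vec_eq[of _ n1] append_vec_eq[of _ n2])
  then show ?thesis
    unfolding eq_up_to_sign_def uminus_append_vec uminus_zero_vec_eq[OF assms(5)] by blast
qed

lemma A1_mat_carrier: "B \<in> carrier_mat g1 n1 \<Longrightarrow> A1_mat B b \<in> carrier_mat (g1 + 1) (n1 + 1)"
  by (auto simp: A1_mat_def)

lemma A2_mat_carrier: "C \<in> carrier_mat g2 n2 \<Longrightarrow> A2_mat C c \<in> carrier_mat (1 + g2) (n2 + 1)"
  by (auto simp: A2_mat_def)

lemma A_mat_carrier: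
  "B \<in> carrier_mat g1 n1 \<Longrightarrow> C \<in> carrier_mat g2 n2 \<Longrightarrow>
    A_mat B b C c \<in> carrier_mat (g1 + (1 + g2)) (n1 + (n2 + 1))"
  by (auto simp: A_mat_def A2_mat_def)

lemma col_A1_mat:
  "B \<in> carrier_mat g1 n1 \<Longrightarrow> j < n1 \<Longrightarrow> col (A1_mat B b) j = col B j @\<^sub>v vec1 (b $ j)"
  unfolding A1_mat_def by (intro eq_vecI) (auto simp: mat_of_rows_def)

lemma col_A1_mat_last:
  "B \<in> carrier_mat g1 n1 \<Longrightarrow> col (A1_mat B b) n1 = 0\<^sub>v g1 @\<^sub>v vec1 1"
  unfolding A1_mat_def by (intro eq_vecI) (auto simp: mat_of_rows_def)

lemma col_A2_mat_last:
  "C \<in> carrier_mat g2 n2 \<Longrightarrow> col (A2_mat C c) n2 = vec1 1 @\<^sub>v 0\<^sub>v g2"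
  unfolding A2_mat_def by (intro eq_vecI) (auto simp: mat_of_rows_def)

lemma col_A_mat_left:
  "B \<in> carrier_mat g1 n1 \<Longrightarrow> C \<in> carrier_mat g2 n2 \<Longrightarrow> j < n1 \<Longrightarrow>
    col (A_mat B b C c) j = col B j @\<^sub>v (vec1 (b $ j) @\<^sub>v 0\<^sub>v g2)"
  unfolding A_mat_def A2_mat_def by (intro eq_vecI) (auto simp: mat_of_rows_def)

lemma col_A_mat_right:
  "B \<in> carrier_mat g1 n1 \<Longrightarrow> C \<in> carrier_mat g2 n2 \<Longrightarrow> k < n2 + 1 \<Longrightarrow>
    col (A_mat B b C c) (n1 + k) = 0\<^sub>v g1 @\<^sub>v col (A2_mat C c) k"
  unfolding A_mat_def A2_mat_def by (intro eq_vecI) (auto simp: mat_of_rows_def)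

lemma is_signed_column_A_mat_iff:
  assumes B: "B \<in> carrier_mat g1 n1" and C: "C \<in> carrier_mat g2 n2"
    and x1: "x1 \<in> carrier_vec g1" and x2: "x2 \<in> carrier_vec g2"
  shows "is_signed_column (A_mat B b C c) (x1 @\<^sub>v vec1 a @\<^sub>v x2) \<longleftrightarrow>
    x2 = 0\<^sub>v g2 \<and> is_signed_column (A1_mat B b) (x1 @\<^sub>v vec1 a) \<or>
    x1 = 0\<^sub>v g1 \<and> is_signed_column (A2_mat C c) (vec1 a @\<^sub>v x2)"
proof -
  let ?\<xi> = "x1 @\<^sub>v vec1 a @\<^sub>v x2"
  have dims: "dim_col (A_mat B b C c) = n1 + (n2 + 1)" "dim_col (A1_mat B b) = n1 + 1"
      "dim_col (A2_mat C c) = n2 + 1" "dim_vec x1 = g1"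
    using A_mat_carrier[OF B C, of b c] A1_mat_carrier[OF B, of b] A2_mat_carrier[OF C, of c] x1 by auto
  have left: "eq_up_to_sign ?\<xi> (col (A_mat B b C c) j) \<longleftrightarrow>
      x2 = 0\<^sub>v g2 \<and> eq_up_to_sign (x1 @\<^sub>v vec1 a) (col (A1_mat B b) j)" if "j < n1" for j
    unfolding col_A_mat_left[OF B C that] col_A1_mat[OF B that]
    by (rule eq_up_to_sign_append_zero_right) (use B x1 x2 that in auto)
  have right: "eq_up_to_sign ?\<xi> (col (A_mat B b C c) (n1 + k)) \<longleftrightarrow>
      x1 = 0\<^sub>v g1 \<and> eq_up_to_sign (vec1 a @\<^sub>v x2) (col (A2_mat C c) k)" if "k < n2 + 1" for k
    unfolding col_A_mat_right[OF B C that]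
    by (rule eq_up_to_sign_zero_append[OF x1])
  have corner: "eq_up_to_sign ?\<xi> (col (A_mat B b C c) (n1 + n2)) \<longleftrightarrow>
      x2 = 0\<^sub>v g2 \<and> eq_up_to_sign (x1 @\<^sub>v vec1 a) (col (A1_mat B b) n1)"
    unfolding col_A_mat_right[OF B C less_add_one] col_A2_mat_last[OF C] col_A1_mat_last[OF B]
    by (rule eq_up_to_sign_append_zero_right[OF x1 zero_carrier_vec _ _ x2]) simp_all
  have split_A1: "(\<exists>j < n1 + 1. P j) \<longleftrightarrow> (\<exists>j < n1. P j) \<or> P n1" for P
    unfolding Suc_eq_plus1[symmetric] less_Suc_eq by blast
  show ?thesis
    unfolding is_signed_column_def dims ex_less_add_iff[of n1 "n2 + 1"] split_A1
    using left right corner less_add_one[of n2] by blast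
qed

lemma well_suitedD:
  assumes "well_suited Q A" "A \<in> carrier_mat g n"
  shows "Q \<in> carrier_mat g g" "transpose_mat Q = Q" "pos_def_mat Q g"
    "\<forall>\<xi> \<in> carrier_vec g. \<xi> \<noteq> 0\<^sub>v g \<longrightarrow> 1 \<le> qform Q (map_vec real_of_int \<xi>) \<and>
       (qform Q (map_vec real_of_int \<xi>) = 1 \<longleftrightarrow> is_signed_column A \<xi>)"
  using assms unfolding well_suited_def symmetric_real_mat_def is_signed_column_def eq_up_to_sign_def
  by (simp_all add: Let_def)

lemma well_suitedI:
  assumes "A \<in> carrier_mat g n" "Q \<in> carrier_mat g g" "transpose_mat Q = Q" "pos_def_mat Q g"
    "\<And>\<xi>. \<xi> \<in> carrier_vec g \<Longrightarrow> \<xi> \<noteq> 0\<^sub>v g \<Longrightarrow> 1 \<le> qform Q (map_vec real_of_int \<xi>) \<and>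
       (qform Q (map_vec real_of_int \<xi>) = 1 \<longleftrightarrow> is_signed_column A \<xi>)"
  shows "well_suited Q A"
  using assms unfolding well_suited_def symmetric_real_mat_def is_signed_column_def eq_up_to_sign_def
  by (simp add: Let_def)

lemma well_suited_diag_eq_one:
  assumes "well_suited Q A" "A \<in> carrier_mat g n" "j < n" "col A j = unit_vec g i" "i < g"
  shows "Q $$ (i, i) = 1"
proof -
  note ws = well_suitedD[OF assms(1,2)]
  have "is_signed_column A (unit_vec g i)"
    using assms(2-4) unfolding is_signed_column_def eq_up_to_sign_def by auto
  moreover have "unit_vec g i \<noteq> (0\<^sub>v g :: int vec)"
    using assms(5) by (metis index_unit_vec(1) index_zero_vec(1) zero_neq_one)
  moreover have "map_vec real_of_int (unit_vec g i) = unit_vec g i"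
    by (intro eq_vecI) (auto simp: unit_vec_def)
  ultimately have "qform Q (unit_vec g i) = 1"
    using ws(4) by (metis unit_vec_carrier)
  then show ?thesis
    using ws(1) assms(5) by (simp add: scalar_prod_left_unit[of _ g])
qed

lemma qform_Qbar_mat_of_int_ge:
  fixes x1 x2 :: "int vec"
  assumes Q1: "Q1 \<in> carrier_mat g1 g1" and r1: "r1 \<in> carrier_vec g1"
    and Q2: "Q2 \<in> carrier_mat g2 g2" and r2: "r2 \<in> carrier_vec g2"
    and lattice1: "\<forall>\<eta> \<in> carrier_vec (g1 + 1). \<eta> \<noteq> 0\<^sub>v (g1 + 1) \<longrightarrow>
      1 \<le> qform (Qbar1_mat Q1 r1) (map_vec real_of_int \<eta>)"
    and lattice2: "\<forall>\<eta> \<in> carrier_vec (1 + g2). \<eta> \<noteq> 0\<^sub>v (1 + g2) \<longrightarrow>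
      1 \<le> qform (Qbar2_mat r2 Q2) (map_vec real_of_int \<eta>)"
    and x1: "x1 \<in> carrier_vec g1" "x1 \<noteq> 0\<^sub>v g1" and x2: "x2 \<in> carrier_vec g2" "x2 \<noteq> 0\<^sub>v g2"
  shows "3/2 \<le> qform (Qbar_mat Q1 r1 r2 Q2) (map_vec real_of_int (x1 @\<^sub>v vec1 a @\<^sub>v x2))"
proof -
  let ?M = "map_vec real_of_int"
  have "3/4 \<le> qform Q1 (?M x1) - (?M x1 \<bullet> r1)\<^sup>2"
    by (rule schur_qform_ge_Qbar1[OF Q1 r1 lattice1 x1])
  moreover have "3/4 \<le> qform Q2 (?M x2) - (?M x2 \<bullet> r2)\<^sup>2"
    by (rule schur_qform_ge_Qbar2[OF Q2 r2 lattice2 x2])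
  ultimately show ?thesis
    unfolding map_vec_append_vec map_vec_vec1
    using qform_Qbar_mat[OF Q1 r1 Q2 r2, of "?M x1" "?M x2"] x1 x2
    by (simp add: add_mono add_increasing2)
qed

lemma Qbar_mat_lattice_minimum:
  fixes Q1 Q2 :: "real mat" and \<xi> :: "int vec"
  assumes B: "B \<in> carrier_mat g1 n1" and C: "C \<in> carrier_mat g2 n2"
    and Q1: "Q1 \<in> carrier_mat g1 g1" and r1: "r1 \<in> carrier_vec g1"
    and Q2: "Q2 \<in> carrier_mat g2 g2" and r2: "r2 \<in> carrier_vec g2"
    and min1: "\<forall>\<eta> \<in> carrier_vec (g1 + 1). \<eta> \<noteq> 0\<^sub>v (g1 + 1) \<longrightarrow>
      1 \<le> qform (Qbar1_mat Q1 r1) (map_vec real_of_int \<eta>) \<and>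
      (qform (Qbar1_mat Q1 r1) (map_vec real_of_int \<eta>) = 1 \<longleftrightarrow> is_signed_column (A1_mat B b) \<eta>)"
    and min2: "\<forall>\<eta> \<in> carrier_vec (1 + g2). \<eta> \<noteq> 0\<^sub>v (1 + g2) \<longrightarrow>
      1 \<le> qform (Qbar2_mat r2 Q2) (map_vec real_of_int \<eta>) \<and>
      (qform (Qbar2_mat r2 Q2) (map_vec real_of_int \<eta>) = 1 \<longleftrightarrow> is_signed_column (A2_mat C c) \<eta>)"
    and \<xi>: "\<xi> \<in> carrier_vec (g1 + (1 + g2))" and nz: "\<xi> \<noteq> 0\<^sub>v (g1 + (1 + g2))"
  shows "1 \<le> qform (Qbar_mat Q1 r1 r2 Q2) (map_vec real_of_int \<xi>) \<and>
    (qform (Qbar_mat Q1 r1 r2 Q2) (map_vec real_of_int \<xi>) = 1 \<longleftrightarrow> is_signed_column (A_mat B b C c) \<xi>)"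
proof -
  let ?F = "qform (Qbar_mat Q1 r1 r2 Q2) (map_vec real_of_int \<xi>)"
  obtain x1 a x2 where x1: "x1 \<in> carrier_vec g1" and x2: "x2 \<in> carrier_vec g2"
    and \<xi>_eq: "\<xi> = x1 @\<^sub>v vec1 a @\<^sub>v x2"
    using carrier_vec_three_blocks[OF \<xi>] .
  have nz': "\<not> (x1 = 0\<^sub>v g1 \<and> a = 0 \<and> x2 = 0\<^sub>v g2)"
    using nz x1 x2 unfolding \<xi>_eq by (auto simp: append3_vec_eq_zero_iff vec1_eq_zero_iff)
  have face1: "1 \<le> ?F \<and> (?F = 1 \<longleftrightarrow> is_signed_column (A1_mat B b) (x1 @\<^sub>v vec1 a))"
    if "x2 = 0\<^sub>v g2"
  proof -
    have "x1 @\<^sub>v vec1 a \<in> carrier_vec (g1 + 1)" "x1 @\<^sub>v vec1 a \<noteq> 0\<^sub>v (g1 + 1)"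
      by (rule append_vec_nonzero[OF x1]; use nz' that vec1_eq_zero_iff[of a] in auto)+
    then show ?thesis
      unfolding \<xi>_eq that qform_Qbar_mat_of_int_zero_right[OF Q1 r1 Q2 r2 x1] using min1 by blast
  qed
  have face2: "1 \<le> ?F \<and> (?F = 1 \<longleftrightarrow> is_signed_column (A2_mat C c) (vec1 a @\<^sub>v x2))"
    if "x1 = 0\<^sub>v g1"
  proof -
    have "vec1 a @\<^sub>v x2 \<in> carrier_vec (1 + g2)" "vec1 a @\<^sub>v x2 \<noteq> 0\<^sub>v (1 + g2)"
      by (rule append_vec_nonzero[OF _ x2]; use nz' that vec1_eq_zero_iff[of a] in auto)+
    then show ?thesis
      unfolding \<xi>_eq that qform_Qbar_mat_of_int_zero_left[OF Q1 r1 Q2 r2 x2] using min2 by blast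
  qed
  have lattice1: "\<forall>\<eta> \<in> carrier_vec (g1 + 1). \<eta> \<noteq> 0\<^sub>v (g1 + 1) \<longrightarrow>
      1 \<le> qform (Qbar1_mat Q1 r1) (map_vec real_of_int \<eta>)"
    using min1 by blast
  have lattice2: "\<forall>\<eta> \<in> carrier_vec (1 + g2). \<eta> \<noteq> 0\<^sub>v (1 + g2) \<longrightarrow>
      1 \<le> qform (Qbar2_mat r2 Q2) (map_vec real_of_int \<eta>)"
    using min2 by blast
  have interior: "3/2 \<le> ?F" if "x1 \<noteq> 0\<^sub>v g1" "x2 \<noteq> 0\<^sub>v g2"
    unfolding \<xi>_eq
    by (rule qform_Qbar_mat_of_int_ge[OF Q1 r1 Q2 r2 lattice1 lattice2 x1 that(1) x2 that(2)])
  have signed: "is_signed_column (A_mat B b C c) \<xi> \<longleftrightarrow>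
      x2 = 0\<^sub>v g2 \<and> is_signed_column (A1_mat B b) (x1 @\<^sub>v vec1 a) \<or>
      x1 = 0\<^sub>v g1 \<and> is_signed_column (A2_mat C c) (vec1 a @\<^sub>v x2)"
    unfolding \<xi>_eq by (rule is_signed_column_A_mat_iff[OF B C x1 x2])
  consider "x2 = 0\<^sub>v g2" | "x1 = 0\<^sub>v g1" | "x1 \<noteq> 0\<^sub>v g1" "x2 \<noteq> 0\<^sub>v g2"
    by blast
  then show ?thesis
  proof cases
    case 1
    then show ?thesis
      unfolding signed using face1 face2 by blast
  next
    case 2
    then show ?thesis
      unfolding signed using face1 face2 by blast
  next
    case 3
    then show ?thesis
      unfolding signed using interior by force
  qed
qed

lemma well_suited_Qbar_mat:
  assumes B: "B \<in> carrier_mat g1 n1" and C: "C \<in> carrier_mat g2 n2"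
    and Q1: "Q1 \<in> carrier_mat g1 g1" and r1: "r1 \<in> carrier_vec g1"
    and Q2: "Q2 \<in> carrier_mat g2 g2" and r2: "r2 \<in> carrier_vec g2"
    and ws1: "well_suited (Qbar1_mat Q1 r1) (A1_mat B b)"
    and ws2: "well_suited (Qbar2_mat r2 Q2) (A2_mat C c)"
  shows "well_suited (Qbar_mat Q1 r1 r2 Q2) (A_mat B b C c)"
proof (rule well_suitedI[OF A_mat_carrier[OF B C]])
  note ws1 = well_suitedD[OF ws1 A1_mat_carrier[OF B]]
  note ws2 = well_suitedD[OF ws2 A2_mat_carrier[OF C]]
  show "Qbar_mat Q1 r1 r2 Q2 \<in> carrier_mat (g1 + (1 + g2)) (g1 + (1 + g2))"
    unfolding Qbar_mat_def Let_def by (rule four_block_carrier_mat[OF Q1 ws2(1)])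
  have "transpose_mat Q1 = Q1"
    by (rule transpose_four_block_mat_upper_left[OF Q1 _ _ _ ws1(2)[unfolded Qbar1_mat_def]])
      (use r1 in auto)
  then show "transpose_mat (Qbar_mat Q1 r1 r2 Q2) = Qbar_mat Q1 r1 r2 Q2"
    by (rule transpose_Qbar_mat[OF Q1 r1 Q2 r2 _ ws2(2)])
  show "pos_def_mat (Qbar_mat Q1 r1 r2 Q2) (g1 + (1 + g2))"
    by (rule pos_def_Qbar_mat[OF Q1 r1 Q2 r2 ws1(3) ws2(3)])
  show "1 \<le> qform (Qbar_mat Q1 r1 r2 Q2) (map_vec real_of_int \<xi>) \<and>
      (qform (Qbar_mat Q1 r1 r2 Q2) (map_vec real_of_int \<xi>) = 1 \<longleftrightarrow> is_signed_column (A_mat B b C c) \<xi>)"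
    if "\<xi> \<in> carrier_vec (g1 + (1 + g2))" "\<xi> \<noteq> 0\<^sub>v (g1 + (1 + g2))" for \<xi>
    by (rule Qbar_mat_lattice_minimum[OF B C Q1 r1 Q2 r2 ws1(4) ws2(4) that])
qed

theorem lemma4p2p4:
  fixes B C :: "int mat" and b c :: "int vec" and Qb1 Qb2 :: "real mat"
    and g1 n1 g2 n2 :: nat
  assumes "B \<in> carrier_mat g1 n1" and "b \<in> carrier_vec n1"
    and "C \<in> carrier_mat g2 n2" and "c \<in> carrier_vec n2"
    and "simple_mat (A1_mat B b)" and "totally_unimodular (A1_mat B b)"
    and "simple_mat (A2_mat C c)" and "totally_unimodular (A2_mat C c)"
    and "well_suited Qb1 (A1_mat B b)"
    and "well_suited Qb2 (A2_mat C c)"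
  shows "\<exists>Q1 r1 Q2 r2.
           Q1 \<in> carrier_mat g1 g1 \<and> r1 \<in> carrier_vec g1 \<and>
           Q2 \<in> carrier_mat g2 g2 \<and> r2 \<in> carrier_vec g2 \<and>
           Qb1 = Qbar1_mat Q1 r1 \<and> Qb2 = Qbar2_mat r2 Q2 \<and>
           well_suited (Qbar_mat Q1 r1 r2 Q2) (A_mat B b C c)"
proof -
  note B = assms(1) and C = assms(3) and ws1 = assms(9) and ws2 = assms(10)
  have "col (A1_mat B b) n1 = unit_vec (g1 + 1) g1"
    unfolding col_A1_mat_last[OF B] by (rule zero_append_vec1_one)
  then have "Qb1 $$ (g1, g1) = 1"
    by (rule well_suited_diag_eq_one[OF ws1 A1_mat_carrier[OF B], rotated]) simp_all
  then obtain Q1 r1 where Q1: "Q1 \<in> carrier_mat g1 g1" and r1: "r1 \<in> carrier_vec g1"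
    and Qb1: "Qb1 = Qbar1_mat Q1 r1"
    using Qbar1_mat_decomposition well_suitedD(1,2)[OF ws1 A1_mat_carrier[OF B]] by metis
  have "col (A2_mat C c) n2 = unit_vec (1 + g2) 0"
    unfolding col_A2_mat_last[OF C] by (rule vec1_one_append_zero)
  then have "Qb2 $$ (0, 0) = 1"
    by (rule well_suited_diag_eq_one[OF ws2 A2_mat_carrier[OF C], rotated]) simp_all
  then obtain Q2 r2 where Q2: "Q2 \<in> carrier_mat g2 g2" and r2: "r2 \<in> carrier_vec g2"
    and Qb2: "Qb2 = Qbar2_mat r2 Q2"
    using Qbar2_mat_decomposition well_suitedD(1,2)[OF ws2 A2_mat_carrier[OF C]] by metis
  have "well_suited (Qbar_mat Q1 r1 r2 Q2) (A_mat B b C c)"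
    using well_suited_Qbar_mat[OF B C Q1 r1 Q2 r2] ws1 ws2 unfolding Qb1 Qb2 by blast
  then show ?thesis
    using Q1 r1 Q2 r2 Qb1 Qb2 by blast
qed

end
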